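(* Let $\nu$ be an ergodic $S$-invariant probability measure on $X_\eta$ different from the Dirac measure at the all-zero sequence, and let $k\ge1$. Let $R_k$ denote the rotation $z\mapsto z+1$ on $\mathbb Z/b_k\mathbb Z$ with uniform measure. Then $(S,X_\eta,\nu)$ is not disjoint from $R_k$ (i.e. they admit a joining other than the product measure).
   Context: Let $S$ be the shift on $\{0,1\}^{\mathbb Z}$, $(Sx)(n)=x(n+1)$. Let $\mathscr{B}=\{b_1,b_2,\dots\}\subset\{2,3,\dots\}$ with $\gcd(b_i,b_j)=1$ for $i\ne j$ and $\sum_i1/b_i<\infty$. Define $\eta(n)=1$ iff $b_i\nmid n$ for all $i$ (else $0$), and let $X_\eta$ be the set of $y\in\{0,1\}^{\mathbb Z}$ all of whose finite blocks occur in $\eta$. Two measure-preserving systems are disjoint if the product measure is their only joining (invariant measure on the product with the given marginals). *)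

theory Defs
  imports "HOL-Probability.Probability"
begin

text \<open>The full shift on {0,1}^Z, with points modelled as functions int => bool
  (True = 1, False = 0), and its product (= Borel) sigma-algebra.\<close>

definition shift :: "(int \<Rightarrow> bool) \<Rightarrow> (int \<Rightarrow> bool)" where
  "shift x = (\<lambda>n. x (n + 1))"

definition shift_space :: "(int \<Rightarrow> bool) measure" where
  "shift_space = (\<Pi>\<^sub>M n\<in>(UNIV::int set). (count_space (UNIV::bool set)))"

text \<open>The B-free characteristic sequence, with B = {b i | i :: nat}.\<close>

definition Bfree_eta :: "(nat \<Rightarrow> nat) \<Rightarrow> int \<Rightarrow> bool" where
  "Bfree_eta b n = (\<forall>i. \<not> (int (b i) dvd n))"

definition X_eta :: "(nat \<Rightarrow> nat) \<Rightarrow> (int \<Rightarrow> bool) set" where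
  "X_eta b = {y. \<forall>m n. \<exists>t. \<forall>j\<in>{m..n}. y j = Bfree_eta b (j + t)}"

definition mp_system :: "'a measure \<Rightarrow> ('a \<Rightarrow> 'a) \<Rightarrow> bool" where
  "mp_system M T \<longleftrightarrow> prob_space M \<and> T \<in> measurable M M \<and> distr M M T = M"

definition ergodic :: "'a measure \<Rightarrow> ('a \<Rightarrow> 'a) \<Rightarrow> bool" where
  "ergodic M T \<longleftrightarrow> mp_system M T \<and>
     (\<forall>A\<in>sets M. T -` A \<inter> space M = A \<longrightarrow> measure M A = 0 \<or> measure M A = 1)"

definition joining :: "'a measure \<Rightarrow> ('a \<Rightarrow> 'a) \<Rightarrow> 'b measure \<Rightarrow> ('b \<Rightarrow> 'b)
    \<Rightarrow> ('a \<times> 'b) measure \<Rightarrow> bool" where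
  "joining M T N U \<rho> \<longleftrightarrow>
     sets \<rho> = sets (M \<Otimes>\<^sub>M N) \<and> prob_space \<rho> \<and>
     (\<lambda>(x, y). (T x, U y)) \<in> measurable \<rho> \<rho> \<and>
     distr \<rho> \<rho> (\<lambda>(x, y). (T x, U y)) = \<rho> \<and>
     distr \<rho> M fst = M \<and> distr \<rho> N snd = N"

definition disjoint_systems :: "'a measure \<Rightarrow> ('a \<Rightarrow> 'a) \<Rightarrow> 'b measure \<Rightarrow> ('b \<Rightarrow> 'b) \<Rightarrow> bool" where
  "disjoint_systems M T N U \<longleftrightarrow> (\<forall>\<rho>. joining M T N U \<rho> \<longrightarrow> \<rho> = M \<Otimes>\<^sub>M N)"

definition rot :: "nat \<Rightarrow> nat \<Rightarrow> nat" where
  "rot q z = (z + 1) mod q"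

definition cyclic_space :: "nat \<Rightarrow> nat measure" where
  "cyclic_space q = uniform_count_measure {..<q}"

end

theory Submission
  imports Defs
begin

text \<open>
  Idea: a point \<open>y \<in> X_eta b\<close> copies \<open>\<eta>\<close> on every window, and \<open>\<eta>\<close> vanishes on the
  multiples of \<open>q = b k\<close>; hence \<open>y\<close> vanishes on at least one whole residue class
  mod \<open>q\<close> (it "avoids" that residue).  Coupling \<open>y\<close> with a residue chosen uniformly
  among those it avoids gives a measure \<open>\<rho>\<close> on \<open>X \<times> \<int>/q\<int>\<close> with density
  \<open>residue_weight q y z\<close> w.r.t. \<open>\<nu> \<Otimes> uniform\<close>.  Since shifting \<open>y\<close> rotates the set of
  avoided residues, \<open>\<rho>\<close> is a joining.  It gives no mass to the non-avoiding pairs,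
  whereas the product measure does as soon as \<open>\<nu>\<close> charges sequences with a 1, i.e.
  as soon as \<open>\<nu>\<close> is not the Dirac mass at \<open>0\<close>.  So \<open>\<rho>\<close> is not the product.
\<close>

lemma rot_less: "0 < q \<Longrightarrow> rot q z < q"
  by (simp add: rot_def)

lemma rot_Suc: "Suc z < q \<Longrightarrow> rot q z = Suc z"
  by (simp add: rot_def)

lemma bij_rot: assumes q: "0 < q" shows "bij_betw (rot q) {..<q} {..<q}"
proof -
  have "inj_on (rot q) {..<q}"
    by (rule inj_onI) (auto simp: rot_def mod_if split: if_splits)
  moreover have "rot q ` {..<q} \<subseteq> {..<q}" using q by (auto simp: rot_less)
  ultimately show ?thesis by (simp add: bij_betw_def endo_inj_surj)
qed

lemma bij_betw_preimage:
  assumes "bij_betw f X Y" "A \<subseteq> Y" shows "bij_betw f (f -` A \<inter> X) A"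
  using assms unfolding bij_betw_def by (auto intro: inj_on_subset)

lemma space_cyclic_space: "space (cyclic_space q) = {..<q}"
  and sets_cyclic_space: "sets (cyclic_space q) = Pow {..<q}"
  by (simp_all add: cyclic_space_def space_uniform_count_measure sets_uniform_count_measure)

lemma prob_space_cyclic_space: "0 < q \<Longrightarrow> prob_space (cyclic_space q)"
  unfolding cyclic_space_def by (rule prob_space_uniform_count_measure) auto

lemma nn_integral_cyclic_space:
  "integral\<^sup>N (cyclic_space q) f = (\<Sum>z<q. ennreal (1 / real q) * f z)"
  unfolding cyclic_space_def uniform_count_measure_def
  by (subst nn_integral_point_measure_finite) auto

lemma measurable_rot: "0 < q \<Longrightarrow> rot q \<in> cyclic_space q \<rightarrow>\<^sub>M cyclic_space q"
  by (auto simp: measurable_def space_cyclic_space sets_cyclic_space rot_less)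

text \<open>Needed to substitute the (countably many) values of the second coordinate.\<close>

lemma measurable_snd_cyclic_space: "snd \<in> M \<Otimes>\<^sub>M cyclic_space q \<rightarrow>\<^sub>M count_space UNIV"
proof -
  have "(\<lambda>z. z) \<in> cyclic_space q \<rightarrow>\<^sub>M count_space UNIV"
    by (auto simp: measurable_count_space_eq2_countable space_cyclic_space sets_cyclic_space)
  then show ?thesis by measurable
qed

lemma distr_rot_cyclic_space:
  assumes q: "0 < q" shows "distr (cyclic_space q) (cyclic_space q) (rot q) = cyclic_space q"
proof (rule measure_eqI)
  fix A assume "A \<in> sets (distr (cyclic_space q) (cyclic_space q) (rot q))"
  then have A: "A \<subseteq> {..<q}" by (simp add: sets_cyclic_space)
  have "card (rot q -` A \<inter> {..<q}) = card A"
    by (rule bij_betw_same_card[OF bij_betw_preimage[OF bij_rot[OF q] A]])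
  then show "emeasure (distr (cyclic_space q) (cyclic_space q) (rot q)) A = emeasure (cyclic_space q) A"
    using A q measurable_rot[OF q]
    by (simp add: emeasure_distr sets_cyclic_space space_cyclic_space)
      (simp add: cyclic_space_def emeasure_uniform_count_measure)
qed simp

lemma rot_invariant_constant:
  assumes inv: "\<And>z. z < q \<Longrightarrow> h (rot q z) = h z" and z: "z < q"
  shows "h z = h 0"
  using z
proof (induction z)
  case (Suc z)
  then show ?case using inv[of z] rot_Suc[OF Suc.prems] by simp
qed simp

lemma ennreal_inverse_mult_of_nat: "0 < q \<Longrightarrow> ennreal (1 / real q) * of_nat q = 1"
  by (simp add: ennreal_of_nat_eq_real_of_nat ennreal_mult'[symmetric])

text \<open>
  Let \<open>(M, T)\<close> be measure preserving
  and \<open>g \<ge> 0\<close> a density on \<open>M \<Otimes> \<int>/q\<int>\<close> with \<open>g (T x, z + 1) = g (x, z)\<close> whose fibres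
  \<open>\<Sum>z. g (x, z)\<close> all equal \<open>q\<close>.  Then \<open>density (M \<Otimes> \<int>/q\<int>) g\<close> is a joining of \<open>T\<close>
  with the rotation: the fibre condition gives the first marginal, invariance of \<open>M\<close>
  makes the column integrals \<open>\<integral> g (x, z) dM\<close> rotation invariant, hence equal to 1,
  which gives the second marginal.
\<close>

context
  fixes M :: "'a measure" and T :: "'a \<Rightarrow> 'a" and q :: nat and g :: "'a \<times> nat \<Rightarrow> ennreal"
  assumes mp: "mp_system M T" and q_pos: "0 < q"
    and g_meas[measurable]: "g \<in> borel_measurable (M \<Otimes>\<^sub>M cyclic_space q)"
    and g_inv: "\<And>x z. g (T x, rot q z) = g (x, z)"
    and g_sum: "\<And>x. x \<in> space M \<Longrightarrow> (\<Sum>z<q. g (x, z)) = of_nat q"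
begin

interpretation M: prob_space M
  using mp by (simp add: mp_system_def)

interpretation N: prob_space "cyclic_space q"
  using q_pos by (rule prob_space_cyclic_space)

lemma T_measurable: "T \<in> M \<rightarrow>\<^sub>M M"
  using mp by (simp add: mp_system_def)

lemma emeasure_invariant_density:
  assumes F: "F \<in> sets (M \<Otimes>\<^sub>M cyclic_space q)"
  shows "emeasure (density (M \<Otimes>\<^sub>M cyclic_space q) g) F
    = (\<integral>\<^sup>+ x. (\<Sum>z<q. ennreal (1 / real q) * (g (x, z) * indicator F (x, z))) \<partial>M)"
proof -
  have "emeasure (density (M \<Otimes>\<^sub>M cyclic_space q) g) F
      = (\<integral>\<^sup>+ p. g p * indicator F p \<partial>(M \<Otimes>\<^sub>M cyclic_space q))"
    by (rule emeasure_density[OF g_meas F])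
  also have "\<dots> = (\<integral>\<^sup>+ x. \<integral>\<^sup>+ z. g (x, z) * indicator F (x, z) \<partial>cyclic_space q \<partial>M)"
    using F by (subst N.nn_integral_fst[symmetric]) auto
  finally show ?thesis by (simp add: nn_integral_cyclic_space)
qed

lemma column_measurable: "z < q \<Longrightarrow> (\<lambda>x. g (x, z)) \<in> borel_measurable M"
  using measurable_Pair1[OF g_meas, of z] by (simp add: space_cyclic_space)

lemma column_integral:
  assumes z: "z < q" shows "(\<integral>\<^sup>+ x. g (x, z) \<partial>M) = 1"
proof -
  define h where "h z = (\<integral>\<^sup>+ x. g (x, z) \<partial>M)" for z
  note [measurable] = column_measurable
  have "h (rot q w) = h w" if "w < q" for w
  proof -
    have "h (rot q w) = (\<integral>\<^sup>+ x. g (x, rot q w) \<partial>distr M M T)"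
      using mp by (simp add: h_def mp_system_def)
    also have "\<dots> = (\<integral>\<^sup>+ x. g (T x, rot q w) \<partial>M)"
      using q_pos by (intro nn_integral_distr) (simp_all add: rot_less T_measurable)
    finally show ?thesis by (simp add: h_def g_inv)
  qed
  then have h_const: "h w = h 0" if "w < q" for w
    using rot_invariant_constant that by metis
  have "of_nat q * h 0 = (\<Sum>w<q. h 0)"
    by simp
  also have "\<dots> = (\<Sum>w<q. h w)"
    by (intro sum.cong refl h_const[symmetric]) simp
  also have "\<dots> = (\<integral>\<^sup>+ x. (\<Sum>w<q. g (x, w)) \<partial>M)"
    unfolding h_def by (rule nn_integral_sum[symmetric]) simp
  also have "\<dots> = of_nat q"
    using M.emeasure_space_1 by (simp add: g_sum cong: nn_integral_cong)
  finally have "ennreal (1 / real q) * (of_nat q * h 0) = ennreal (1 / real q) * of_nat q"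
    by simp
  then have "h 0 = 1"
    by (simp add: mult.assoc[symmetric] ennreal_inverse_mult_of_nat[OF q_pos])
  with h_const[OF z] show ?thesis by (simp only: h_def)
qed

lemma emeasure_invariant_density_fst:
  assumes A: "A \<in> sets M"
  shows "emeasure (density (M \<Otimes>\<^sub>M cyclic_space q) g) (A \<times> {..<q}) = emeasure M A"
proof -
  have "(\<Sum>z<q. ennreal (1 / real q) * (g (x, z) * indicator (A \<times> {..<q}) (x, z)))
      = indicator A x" if x: "x \<in> space M" for x
  proof -
    have "(\<Sum>z<q. ennreal (1 / real q) * (g (x, z) * indicator (A \<times> {..<q}) (x, z)))
        = ennreal (1 / real q) * (\<Sum>z<q. g (x, z)) * indicator A x"
      by (simp add: sum_distrib_left sum_distrib_right indicator_def mult.assoc)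
    then show ?thesis by (simp add: g_sum[OF x] ennreal_inverse_mult_of_nat[OF q_pos])
  qed
  moreover have "A \<times> {..<q} \<in> sets (M \<Otimes>\<^sub>M cyclic_space q)"
    using A by (intro pair_measureI) (simp_all add: sets_cyclic_space)
  ultimately have "emeasure (density (M \<Otimes>\<^sub>M cyclic_space q) g) (A \<times> {..<q})
      = (\<integral>\<^sup>+ x. indicator A x \<partial>M)"
    by (simp add: emeasure_invariant_density cong: nn_integral_cong)
  with A show ?thesis by simp
qed

lemma emeasure_invariant_density_snd:
  assumes B: "B \<subseteq> {..<q}"
  shows "emeasure (density (M \<Otimes>\<^sub>M cyclic_space q) g) (space M \<times> B) = emeasure (cyclic_space q) B"
proof -
  note [measurable] = column_measurable
  have B_sets: "space M \<times> B \<in> sets (M \<Otimes>\<^sub>M cyclic_space q)"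
    using B by (intro pair_measureI) (simp_all add: sets_cyclic_space)
  have "emeasure (density (M \<Otimes>\<^sub>M cyclic_space q) g) (space M \<times> B)
      = (\<integral>\<^sup>+ x. (\<Sum>z<q. ennreal (1 / real q) * indicator B z * g (x, z)) \<partial>M)"
    unfolding emeasure_invariant_density[OF B_sets]
    by (intro nn_integral_cong sum.cong refl) (simp add: indicator_def)
  also have "\<dots> = (\<Sum>z<q. \<integral>\<^sup>+ x. ennreal (1 / real q) * indicator B z * g (x, z) \<partial>M)"
    by (rule nn_integral_sum) simp
  also have "\<dots> = (\<Sum>z<q. ennreal (1 / real q) * indicator B z * (\<integral>\<^sup>+ x. g (x, z) \<partial>M))"
    by (intro sum.cong refl nn_integral_cmult) simp
  also have "\<dots> = (\<integral>\<^sup>+ z. indicator B z \<partial>cyclic_space q)"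
    by (simp add: column_integral nn_integral_cyclic_space)
  finally show ?thesis using B by (simp add: sets_cyclic_space)
qed

lemma product_map_measurable:
  "(\<lambda>(x, z). (T x, rot q z)) \<in> M \<Otimes>\<^sub>M cyclic_space q \<rightarrow>\<^sub>M M \<Otimes>\<^sub>M cyclic_space q"
proof -
  note [measurable] = T_measurable measurable_rot[OF q_pos]
  show ?thesis by measurable
qed

text \<open>
  The product measure is invariant under \<open>T \<times> rot\<close>, and so is \<open>g\<close>; hence so is the
  density.
\<close>

lemma invariant_density_shift_invariant:
  "distr (density (M \<Otimes>\<^sub>M cyclic_space q) g) (density (M \<Otimes>\<^sub>M cyclic_space q) g)
     (\<lambda>(x, z). (T x, rot q z)) = density (M \<Otimes>\<^sub>M cyclic_space q) g"
  (is "distr ?\<rho> ?\<rho> ?T2 = ?\<rho>")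
proof -
  have product_invariant: "distr (M \<Otimes>\<^sub>M cyclic_space q) (M \<Otimes>\<^sub>M cyclic_space q) ?T2 = M \<Otimes>\<^sub>M cyclic_space q"
    using pair_measure_distr[OF T_measurable measurable_rot[OF q_pos]] mp q_pos
    by (simp add: mp_system_def distr_rot_cyclic_space N.sigma_finite_measure)
  have "distr ?\<rho> ?\<rho> ?T2 = distr (density (M \<Otimes>\<^sub>M cyclic_space q) (\<lambda>p. g (?T2 p))) (M \<Otimes>\<^sub>M cyclic_space q) ?T2"
    by (rule distr_cong) (simp_all add: g_inv split_beta)
  also have "\<dots> = density (distr (M \<Otimes>\<^sub>M cyclic_space q) (M \<Otimes>\<^sub>M cyclic_space q) ?T2) g"
    by (rule density_distr[symmetric]) (simp_all add: product_map_measurable)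
  finally show ?thesis by (simp only: product_invariant)
qed

lemma joining_invariant_density:
  "joining M T (cyclic_space q) (rot q) (density (M \<Otimes>\<^sub>M cyclic_space q) g)"
  (is "joining M T ?N (rot q) ?\<rho>")
proof -
  have space_product: "space (M \<Otimes>\<^sub>M ?N) = space M \<times> {..<q}"
    by (simp add: space_pair_measure space_cyclic_space)
  have fst_marginal: "distr ?\<rho> M fst = M"
  proof (rule measure_eqI)
    fix A assume "A \<in> sets (distr ?\<rho> M fst)"
    then have A: "A \<in> sets M" by simp
    then have "fst -` A \<inter> space ?\<rho> = A \<times> {..<q}"
      using sets.sets_into_space[OF A] by (auto simp: space_product)
    then show "emeasure (distr ?\<rho> M fst) A = emeasure M A"
      using A by (simp add: emeasure_distr emeasure_invariant_density_fst)
  qed simp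
  have snd_marginal: "distr ?\<rho> ?N snd = ?N"
  proof (rule measure_eqI)
    fix B assume "B \<in> sets (distr ?\<rho> ?N snd)"
    then have B: "B \<in> sets ?N" "B \<subseteq> {..<q}" by (simp_all add: sets_cyclic_space)
    then have "snd -` B \<inter> space ?\<rho> = space M \<times> B"
      by (auto simp: space_product)
    then show "emeasure (distr ?\<rho> ?N snd) B = emeasure ?N B"
      using B by (simp add: emeasure_distr emeasure_invariant_density_snd)
  qed simp
  have "emeasure ?\<rho> (space ?\<rho>) = 1"
    using emeasure_invariant_density_fst[of "space M"] by (simp add: space_product M.emeasure_space_1)
  then have "prob_space ?\<rho>" by (rule prob_spaceI)
  moreover have "(\<lambda>(x, z). (T x, rot q z)) \<in> ?\<rho> \<rightarrow>\<^sub>M ?\<rho>"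
    using product_map_measurable by (simp add: measurable_cong_sets[OF sets_density sets_density])
  ultimately show ?thesis
    unfolding joining_def using invariant_density_shift_invariant fst_marginal snd_marginal by simp
qed

end

text \<open>
  The weight distributes mass \<open>q\<close> uniformly over the avoided residues (and uniformly
  over all residues if there is none), so that it is a fibrewise density as above.
\<close>

definition avoids_residue :: "nat \<Rightarrow> (int \<Rightarrow> bool) \<Rightarrow> nat \<Rightarrow> bool" where
  "avoids_residue q y z \<longleftrightarrow> (\<forall>n. int q dvd n + int z \<longrightarrow> \<not> y n)"

definition avoided_count :: "nat \<Rightarrow> (int \<Rightarrow> bool) \<Rightarrow> nat" where
  "avoided_count q y = (\<Sum>z<q. if avoids_residue q y z then 1 else 0)"

definition residue_weight :: "nat \<Rightarrow> (int \<Rightarrow> bool) \<Rightarrow> nat \<Rightarrow> real" where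
  "residue_weight q y z =
     (if avoided_count q y = 0 then 1
      else if avoids_residue q y z then real q / real (avoided_count q y) else 0)"

lemma avoids_residue_mod: "avoids_residue q y (z mod q) \<longleftrightarrow> avoids_residue q y z"
proof -
  have "int z = int (z mod q) + int q * int (z div q)"
    by (metis of_nat_add of_nat_mult mod_mult_div_eq)
  then have "int q dvd n + int (z mod q) \<longleftrightarrow> int q dvd n + int z" for n
    by (metis add.assoc dvd_add_left_iff dvd_triv_left)
  then show ?thesis unfolding avoids_residue_def by simp
qed

lemma avoids_residue_shift: "avoids_residue q (shift y) (rot q z) \<longleftrightarrow> avoids_residue q y z"
proof -
  have shift_index: "(\<forall>n::int. P (n + 1)) \<longleftrightarrow> (\<forall>n. P n)" for P
    by (metis diff_add_cancel)
  have "avoids_residue q (shift y) (Suc z)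
      \<longleftrightarrow> (\<forall>n. int q dvd (n + 1) + int z \<longrightarrow> \<not> y (n + 1))"
    unfolding avoids_residue_def shift_def by (simp add: algebra_simps)
  also have "\<dots> \<longleftrightarrow> avoids_residue q y z"
    unfolding avoids_residue_def by (rule shift_index)
  finally show ?thesis by (simp add: rot_def avoids_residue_mod)
qed

lemma avoided_count_shift:
  assumes q: "0 < q" shows "avoided_count q (shift y) = avoided_count q y"
proof -
  have "avoided_count q (shift y) = (\<Sum>z<q. if avoids_residue q (shift y) (rot q z) then 1 else 0)"
    unfolding avoided_count_def by (rule sum.reindex_bij_betw[OF bij_rot[OF q], symmetric])
  then show ?thesis by (simp add: avoids_residue_shift avoided_count_def)
qed

lemma residue_weight_shift:
  "0 < q \<Longrightarrow> residue_weight q (shift y) (rot q z) = residue_weight q y z"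
  by (simp add: residue_weight_def avoided_count_shift avoids_residue_shift)

lemma residue_weight_nonneg: "0 \<le> residue_weight q y z"
  by (simp add: residue_weight_def)

lemma sum_residue_weight: "0 < q \<Longrightarrow> (\<Sum>z<q. residue_weight q y z) = real q"
proof (cases "avoided_count q y = 0")
  case False
  have "(\<Sum>z<q. residue_weight q y z)
      = (\<Sum>z<q. real (if avoids_residue q y z then 1 else 0)) * (real q / real (avoided_count q y))"
    unfolding sum_distrib_right using False by (intro sum.cong) (auto simp: residue_weight_def)
  also have "\<dots> = real (avoided_count q y) * (real q / real (avoided_count q y))"
    by (simp only: avoided_count_def of_nat_sum)
  finally show ?thesis using False by simp
qed (simp add: residue_weight_def)

lemma sum_residue_weight_ennreal:
  "0 < q \<Longrightarrow> (\<Sum>z<q. ennreal (residue_weight q y z)) = of_nat q"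
  by (simp add: residue_weight_nonneg sum_residue_weight ennreal_of_nat_eq_real_of_nat)

lemma measurable_coordinate[measurable]: "Measurable.pred shift_space (\<lambda>y. y n)"
  unfolding shift_space_def by (rule measurable_component_singleton) simp

lemma measurable_avoids_residue[measurable]:
  "Measurable.pred shift_space (\<lambda>y. avoids_residue q y z)"
  unfolding avoids_residue_def by measurable

lemma measurable_residue_weight:
  assumes M: "sets M = sets shift_space"
  shows "(\<lambda>p. ennreal (residue_weight q (fst p) (snd p))) \<in> borel_measurable (M \<Otimes>\<^sub>M cyclic_space q)"
proof (rule measurable_compose_countable[where f="\<lambda>z p. ennreal (residue_weight q (fst p) z)",
      OF _ measurable_snd_cyclic_space])
  fix z
  have "(\<lambda>y. residue_weight q y z) \<in> borel_measurable M"
    unfolding measurable_cong_sets[OF M refl] residue_weight_def avoided_count_def by measurable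
  then show "(\<lambda>p. ennreal (residue_weight q (fst p) z)) \<in> borel_measurable (M \<Otimes>\<^sub>M cyclic_space q)"
    by measurable
qed

lemma measurable_avoids_residue_pair:
  assumes M: "sets M = sets shift_space"
  shows "Measurable.pred (M \<Otimes>\<^sub>M cyclic_space q) (\<lambda>p. avoids_residue q (fst p) (snd p))"
proof (rule measurable_compose_countable[where f="\<lambda>z p. avoids_residue q (fst p) z",
      OF _ measurable_snd_cyclic_space])
  fix z
  have "Measurable.pred M (\<lambda>y. avoids_residue q y z)"
    unfolding measurable_cong_sets[OF M refl] by measurable
  then show "Measurable.pred (M \<Otimes>\<^sub>M cyclic_space q) (\<lambda>p. avoids_residue q (fst p) z)"
    by measurable
qed

text \<open>
  Otherwise
  each residue class would contain a 1 of \<open>y\<close> inside a fixed window \<open>[-B, B]\<close>; but \<open>y\<close>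
  agrees on that window with a translate \<open>\<eta>(\<cdot> + t)\<close>, which vanishes on the class \<open>-t\<close>.
\<close>

lemma X_eta_avoids_residue:
  assumes q_pos: "0 < b k" and y: "y \<in> X_eta b"
  shows "\<exists>z<b k. avoids_residue (b k) y z"
proof (rule ccontr)
  assume "\<not> (\<exists>z<b k. avoids_residue (b k) y z)"
  then have "\<forall>z\<in>{..<b k}. \<exists>n. int (b k) dvd n + int z \<and> y n"
    by (auto simp: avoids_residue_def)
  then obtain f where f: "\<And>z. z < b k \<Longrightarrow> int (b k) dvd f z + int z \<and> y (f z)"
    by (metis lessThan_iff)
  define B where "B = Max ((\<lambda>z. \<bar>f z\<bar>) ` {..<b k})"
  have fB: "\<bar>f z\<bar> \<le> B" if "z < b k" for z
    unfolding B_def using that by (intro Max_ge) auto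
  from y obtain t where t: "\<And>j. j \<in> {-B..B} \<Longrightarrow> y j = Bfree_eta b (j + t)"
    unfolding X_eta_def by blast
  define z where "z = nat (t mod int (b k))"
  have zq: "z < b k" and zt: "int (b k) dvd t - int z"
    using q_pos by (simp_all add: z_def nat_less_iff mod_eq_dvd_iff)
  have "Bfree_eta b (f z + t)"
    using t[of "f z"] f[OF zq] fB[OF zq] by (simp add: abs_le_iff)
  moreover have "int (b k) dvd f z + t"
    using dvd_add[OF conjunct1[OF f[OF zq]] zt] by simp
  ultimately show False unfolding Bfree_eta_def by blast
qed

lemma AE_X_eta_avoids_residue:
  assumes "prob_space \<nu>" "emeasure \<nu> (X_eta b) = 1" "0 < b k"
  shows "AE y in \<nu>. \<exists>z<b k. avoids_residue (b k) y z"
proof -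
  have "AE y in \<nu>. y \<in> X_eta b"
    using assms(2) by (intro prob_space.AE_prob_1[OF assms(1)]) (simp add: measure_def)
  then show ?thesis
    using X_eta_avoids_residue[of b k, OF assms(3)] by auto
qed

lemma not_avoids_residue_of_hit:
  assumes q: "0 < q" and hit: "y n"
  shows "\<not> avoids_residue q y (nat ((- n) mod int q))"
proof -
  define z where "z = nat ((- n) mod int q)"
  have "int z = (- n) mod int q" using q by (simp add: z_def)
  then have "(n + int z) mod int q = (n + - n) mod int q"
    by (simp only: mod_add_right_eq)
  then have "int q dvd n + int z"
    by (intro mod_0_imp_dvd) simp
  with hit show ?thesis unfolding avoids_residue_def z_def[symmetric] by blast
qed

lemma sets_nonzero_sequences:
  assumes sets_eq: "sets \<nu> = sets shift_space"
  shows "{y \<in> space \<nu>. \<exists>n. y n} \<in> sets \<nu>"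
proof -
  have "Measurable.pred \<nu> (\<lambda>y. y n)" for n
    unfolding measurable_cong_sets[OF sets_eq refl] by measurable
  then show ?thesis by measurable
qed

lemma emeasure_nonzero_support:
  assumes sets_eq: "sets \<nu> = sets shift_space" and prob: "prob_space \<nu>"
    and not_dirac: "\<nu> \<noteq> return shift_space (\<lambda>_. False)"
  shows "emeasure \<nu> {y \<in> space \<nu>. \<exists>n. y n} \<noteq> 0"
proof
  define Y where "Y = {y \<in> space \<nu>. \<exists>n. y n}"
  assume "emeasure \<nu> Y = 0"
  moreover have Y_sets: "Y \<in> sets \<nu>"
    unfolding Y_def by (rule sets_nonzero_sequences[OF sets_eq])
  ultimately have Y_null: "Y \<in> null_sets \<nu>" by (simp add: null_sets_def)
  have zero_in_space: "(\<lambda>_. False) \<in> space \<nu>"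
    using sets_eq_imp_space_eq[OF sets_eq] by (simp add: shift_space_def space_PiM)
  have "\<nu> = return shift_space (\<lambda>_. False)"
  proof (rule measure_eqI)
    fix A assume A: "A \<in> sets \<nu>"
    have nonzero_iff: "(\<exists>n. y n) \<longleftrightarrow> y \<noteq> (\<lambda>_. False)" for y :: "int \<Rightarrow> bool"
      by auto
    have "A - Y = (if (\<lambda>_. False) \<in> A then space \<nu> - Y else {})"
      using sets.sets_into_space[OF A] zero_in_space by (auto simp: Y_def nonzero_iff)
    then have "emeasure \<nu> (A - Y) = indicator A (\<lambda>_. False)"
      using prob_space.emeasure_space_1[OF prob] emeasure_Diff_null_set[OF Y_null sets.top]
      by simp
    then show "emeasure \<nu> A = emeasure (return shift_space (\<lambda>_. False)) A"
      using A sets_eq by (simp add: emeasure_Diff_null_set[OF Y_null A])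
  qed (simp add: sets_eq)
  with not_dirac show False ..
qed

lemma residue_joining:
  assumes "mp_system \<nu> shift" "sets \<nu> = sets shift_space" "0 < q"
  shows "joining \<nu> shift (cyclic_space q) (rot q)
    (density (\<nu> \<Otimes>\<^sub>M cyclic_space q) (\<lambda>p. ennreal (residue_weight q (fst p) (snd p))))"
  using assms(1,3) measurable_residue_weight[OF assms(2)]
  by (rule joining_invariant_density) (simp_all add: assms(3) residue_weight_shift sum_residue_weight_ennreal)

lemma residue_weight_joining_avoids:
  assumes sets_eq: "sets \<nu> = sets shift_space" and q_pos: "0 < q"
    and avoiding: "AE y in \<nu>. \<exists>z<q. avoids_residue q y z"
  shows "emeasure (density (\<nu> \<Otimes>\<^sub>M cyclic_space q) (\<lambda>p. ennreal (residue_weight q (fst p) (snd p))))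
      {p \<in> space (\<nu> \<Otimes>\<^sub>M cyclic_space q). \<not> avoids_residue q (fst p) (snd p)} = 0"
    (is "emeasure (density ?P ?g) ?E = 0")
proof -
  interpret N: prob_space "cyclic_space q"
    using q_pos by (rule prob_space_cyclic_space)
  have E_sets: "?E \<in> sets ?P"
    using measurable_avoids_residue_pair[OF sets_eq] by (rule predE[OF pred_intros_logic(2)])
  have g_meas: "?g \<in> borel_measurable ?P"
    by (rule measurable_residue_weight[OF sets_eq])
  have "emeasure (density ?P ?g) ?E = (\<integral>\<^sup>+ p. ?g p * indicator ?E p \<partial>?P)"
    by (rule emeasure_density[OF g_meas E_sets])
  also have "\<dots> = (\<integral>\<^sup>+ y. \<integral>\<^sup>+ z. ?g (y, z) * indicator ?E (y, z) \<partial>cyclic_space q \<partial>\<nu>)"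
    by (rule N.nn_integral_fst[symmetric])
      (rule borel_measurable_times_ennreal[OF g_meas borel_measurable_indicator[OF E_sets]])
  also have "\<dots> = (\<integral>\<^sup>+ y. 0 \<partial>\<nu>)"
    using avoiding
  proof (intro nn_integral_cong_AE, eventually_elim)
    fix y assume "\<exists>z<q. avoids_residue q y z"
    then have "avoided_count q y \<noteq> 0"
      by (auto simp: avoided_count_def)
    then have "?g (y, z) * indicator ?E (y, z) = 0" for z
      by (simp add: residue_weight_def indicator_def)
    then have "(\<integral>\<^sup>+ z. ?g (y, z) * indicator ?E (y, z) \<partial>cyclic_space q) = (\<integral>\<^sup>+ z. 0 \<partial>cyclic_space q)"
      by (intro nn_integral_cong)
    then show "(\<integral>\<^sup>+ z. ?g (y, z) * indicator ?E (y, z) \<partial>cyclic_space q) = 0"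
      by simp
  qed
  finally show ?thesis by simp
qed

lemma product_violates_avoidance:
  assumes sets_eq: "sets \<nu> = sets shift_space" and prob: "prob_space \<nu>" and q: "0 < q"
    and not_dirac: "\<nu> \<noteq> return shift_space (\<lambda>_. False)"
  shows "emeasure (\<nu> \<Otimes>\<^sub>M cyclic_space q)
      {p \<in> space (\<nu> \<Otimes>\<^sub>M cyclic_space q). \<not> avoids_residue q (fst p) (snd p)} \<noteq> 0"
    (is "emeasure ?P ?E \<noteq> 0")
proof
  interpret N: prob_space "cyclic_space q"
    using q by (rule prob_space_cyclic_space)
  define Y where "Y = {y \<in> space \<nu>. \<exists>n. y n}"
  have Y_sets: "Y \<in> sets \<nu>"
    unfolding Y_def by (rule sets_nonzero_sequences[OF sets_eq])
  have E_sets: "?E \<in> sets ?P"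
    using measurable_avoids_residue_pair[OF sets_eq] by (rule predE[OF pred_intros_logic(2)])
  have "ennreal (1 / real q) * indicator Y y \<le> (\<integral>\<^sup>+ z. indicator ?E (y, z) \<partial>cyclic_space q)"
    if y: "y \<in> space \<nu>" for y
  proof (cases "y \<in> Y")
    case True
    then obtain n where "y n" by (auto simp: Y_def)
    define z where "z = nat ((- n) mod int q)"
    have "z < q" using q by (simp add: z_def nat_less_iff)
    moreover have "(y, z) \<in> ?E"
      using not_avoids_residue_of_hit[of q y n, OF q \<open>y n\<close>] y \<open>z < q\<close>
      by (simp add: z_def space_pair_measure space_cyclic_space)
    ultimately have "ennreal (1 / real q) * indicator ?E (y, z)
        \<le> (\<Sum>w<q. ennreal (1 / real q) * indicator ?E (y, w))"
      by (intro member_le_sum) simp_all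
    with True \<open>(y, z) \<in> ?E\<close> show ?thesis by (simp add: nn_integral_cyclic_space)
  qed simp
  then have "(\<integral>\<^sup>+ y. ennreal (1 / real q) * indicator Y y \<partial>\<nu>)
      \<le> (\<integral>\<^sup>+ y. \<integral>\<^sup>+ z. indicator ?E (y, z) \<partial>cyclic_space q \<partial>\<nu>)"
    by (rule nn_integral_mono)
  also have "\<dots> = emeasure ?P ?E"
    using E_sets by (subst N.nn_integral_fst) auto
  finally have "(\<integral>\<^sup>+ y. ennreal (1 / real q) * indicator Y y \<partial>\<nu>) \<le> emeasure ?P ?E" .
  moreover assume "emeasure ?P ?E = 0"
  ultimately have "ennreal (1 / real q) * emeasure \<nu> Y = 0"
    using Y_sets by (simp add: nn_integral_cmult_indicator)
  then show False
    using emeasure_nonzero_support[OF sets_eq prob not_dirac] q by (simp add: Y_def)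
qed

theorem mainTheorem9:
  fixes b :: "nat \<Rightarrow> nat" and \<nu> :: "(int \<Rightarrow> bool) measure" and k :: nat
  assumes b_ge2: "\<And>i. b i \<ge> 2"
    and b_coprime: "\<And>i j. i \<noteq> j \<Longrightarrow> coprime (b i) (b j)"
    and b_summable: "summable (\<lambda>i. 1 / real (b i))"
    and \<nu>_sets: "sets \<nu> = sets shift_space"
    and \<nu>_prob: "prob_space \<nu>"
    and \<nu>_on_X: "emeasure \<nu> (X_eta b) = 1"
    and \<nu>_ergodic: "ergodic \<nu> shift"
    and \<nu>_not_dirac0: "\<nu> \<noteq> return shift_space (\<lambda>_. False)"
  shows "\<not> disjoint_systems \<nu> shift (cyclic_space (b k)) (rot (b k))"
proof
  define q where "q = b k"
  have q_pos: "0 < q" using b_ge2[of k] by (simp add: q_def)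
  define \<rho> where
    "\<rho> = density (\<nu> \<Otimes>\<^sub>M cyclic_space q) (\<lambda>p. ennreal (residue_weight q (fst p) (snd p)))"
  have "mp_system \<nu> shift" using \<nu>_ergodic by (simp add: ergodic_def)
  then have "joining \<nu> shift (cyclic_space q) (rot q) \<rho>"
    unfolding \<rho>_def using \<nu>_sets q_pos by (rule residue_joining)
  moreover assume "disjoint_systems \<nu> shift (cyclic_space (b k)) (rot (b k))"
  ultimately have product: "\<rho> = \<nu> \<Otimes>\<^sub>M cyclic_space q"
    unfolding disjoint_systems_def q_def by blast
  have "AE y in \<nu>. \<exists>z<q. avoids_residue q y z"
    unfolding q_def by (rule AE_X_eta_avoids_residue[OF \<nu>_prob \<nu>_on_X q_pos[unfolded q_def]])
  from residue_weight_joining_avoids[OF \<nu>_sets q_pos this]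
    product_violates_avoidance[OF \<nu>_sets \<nu>_prob q_pos \<nu>_not_dirac0]
  show False unfolding \<rho>_def[symmetric] product by blast
qed
end
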